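(* Let $G=([n],E)$ be a simple graph. Then $\varepsilon(G)\le n!\,\mathrm{Vol}(\mathrm{Stab}(G))$, where $\mathrm{Vol}$ is $n$-dimensional Lebesgue volume.
   Context: For an undirected simple graph $G=(V,E)$, $\varepsilon(G)$ denotes the maximum, over all acyclic orientations of $E$, of the number of linear extensions of the partial order induced on $V$ (where $u<v$ iff there is a directed path from $u$ to $v$; a linear extension of a poset on an $n$-element set is an order-preserving bijection onto $[n]$). The stable polytope $\mathrm{Stab}(G)\subseteq\mathbb{R}^n$ is the convex hull of the vectors $e_I=\sum_{i\in I}e_i$ over all stable (independent) sets $I$ of $G$, where $e_1,\dots,e_n$ is the standard basis (and $e_\emptyset=0$). *)

theory Defs
  imports "HOL-Analysis.Analysis"
begin

text \<open>Vertices of the graph are the elements of a finite type 'n (so n = CARD('n));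
  the graph is given by its set of ordered pairs E, required symmetric and irreflexive.\<close>

definition simple_graph :: "('n \<times> 'n) set \<Rightarrow> bool" where
  "simple_graph E \<longleftrightarrow> sym E \<and> irrefl E"

definition acyclic_orientation :: "('n \<times> 'n) set \<Rightarrow> ('n \<times> 'n) set \<Rightarrow> bool" where
  "acyclic_orientation E Ori \<longleftrightarrow>
     Ori \<subseteq> E \<and> (\<forall>u v. (u, v) \<in> E \<longrightarrow> (u, v) \<in> Ori \<or> (v, u) \<in> Ori) \<and> acyclic Ori"

definition linear_extensions :: "('n::finite \<times> 'n) set \<Rightarrow> ('n \<Rightarrow> nat) set" where
  "linear_extensions Ori =
     {f. bij_betw f UNIV {1..CARD('n)} \<and> (\<forall>u v. (u, v) \<in> Ori\<^sup>+ \<longrightarrow> f u < f v)}"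

definition eps_graph :: "('n::finite \<times> 'n) set \<Rightarrow> nat" where
  "eps_graph E = Max {card (linear_extensions Ori) | Ori. acyclic_orientation E Ori}"

definition stable_set :: "('n \<times> 'n) set \<Rightarrow> 'n set \<Rightarrow> bool" where
  "stable_set E I \<longleftrightarrow> (\<forall>u\<in>I. \<forall>v\<in>I. (u, v) \<notin> E)"

definition indicator_vec :: "'n::finite set \<Rightarrow> real ^ 'n" where
  "indicator_vec I = (\<chi> i. if i \<in> I then 1 else 0)"

definition stab_polytope :: "('n::finite \<times> 'n) set \<Rightarrow> (real ^ 'n) set" where
  "stab_polytope E = convex hull {indicator_vec I | I. stable_set E I}"

end

theory Submission
  imports Defs
begin

text \<open>
  Stanley's transfer-map argument.  Fix an acyclic orientation \<open>Ori\<close> of \<open>G\<close>.  For a linear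
  extension \<open>f\<close> let \<open>S\<^sub>f\<close> be the open order simplex of points of the unit cube whose
  coordinates are ordered like \<open>f\<close>.  The piecewise linear transfer map
  \<open>\<phi>(y)\<^sub>v = y\<^sub>v - max (0, max {y\<^sub>u | u \<rightarrow> v})\<close>
  is injective, and on \<open>S\<^sub>f\<close> it agrees with the linear map subtracting from \<open>y\<^sub>v\<close> the
  coordinate of the \<open>f\<close>-latest in-neighbour of \<open>v\<close>.  That map is a composition of shears,
  hence preserves Lebesgue measure, so the images \<open>\<phi>(S\<^sub>f)\<close> are pairwise disjoint sets of
  volume \<open>vol S\<^sub>f \<ge> 1/n!\<close>; they lie in \<open>Stab(G)\<close> because \<open>\<phi>(y)\<close> is a "staircase" combination
  of indicator vectors of stable sets.  Summing over the linear extensions gives the theorem.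

  Volume preservation is derived from the library's computation for sheared boxes, since its
  determinant formula for linear images requires a well-ordered index type.
\<close>

definition volume_preserving :: "(real^'n::finite \<Rightarrow> real^'n) \<Rightarrow> bool" where
  "volume_preserving g \<longleftrightarrow>
     (\<forall>S \<in> lmeasurable. g ` S \<in> lmeasurable \<and> measure lebesgue (g ` S) = measure lebesgue S)"

lemma volume_preserving_comp:
  "volume_preserving g \<Longrightarrow> volume_preserving h \<Longrightarrow> volume_preserving (g \<circ> h)"
  unfolding volume_preserving_def image_comp [symmetric] by simp

lemma volume_preserving_if_boxes:
  fixes g :: "real^'n::finite \<Rightarrow> real^'n"
  assumes "linear g" and "\<And>a b. measure lebesgue (g ` cbox a b) = measure lebesgue (cbox a b)"
  shows "volume_preserving g"
  unfolding volume_preserving_def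
proof
  fix S :: "(real^'n) set"
  assume "S \<in> lmeasurable"
  from measure_linear_sufficient [OF assms(1) this, of 1] assms(2)
  show "g ` S \<in> lmeasurable \<and> measure lebesgue (g ` S) = measure lebesgue S"
    by simp
qed

lemma volume_preserving_left_inverse:
  fixes g h :: "real^'n::finite \<Rightarrow> real^'n"
  assumes "linear g" and "volume_preserving h" and inv: "\<And>x. h (g x) = x"
  shows "volume_preserving g"
proof (rule volume_preserving_if_boxes [OF \<open>linear g\<close>])
  fix a b :: "real^'n"
  have "g ` cbox a b \<in> lmeasurable"
    using \<open>linear g\<close> by (rule measurable_linear_image_interval)
  then have "measure lebesgue (h ` g ` cbox a b) = measure lebesgue (g ` cbox a b)"
    using \<open>volume_preserving h\<close> by (simp add: volume_preserving_def)
  moreover have "h ` g ` cbox a b = cbox a b"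
    by (simp add: image_comp inv)
  ultimately show "measure lebesgue (g ` cbox a b) = measure lebesgue (cbox a b)"
    by simp
qed

definition shear :: "'n \<Rightarrow> 'n \<Rightarrow> real \<Rightarrow> real^'n \<Rightarrow> real^'n" where
  "shear m n c x = (\<chi> i. if i = m then x$m + c * x$n else x$i)"

lemma linear_shear: "linear (shear m n c)"
  by (rule linearI) (auto simp: shear_def vec_eq_iff algebra_simps)

text \<open>The library computes the volume of sheared boxes whose \<open>n\<close>-th lower corner is
  non-negative; a translation reduces the general box to that case.\<close>

lemma volume_preserving_shear_plus:
  fixes m n :: "'n::finite"
  assumes "m \<noteq> n"
  shows "volume_preserving (shear m n 1)"
proof (rule volume_preserving_if_boxes [OF linear_shear])
  fix a b :: "real^'n"
  show "measure lebesgue (shear m n 1 ` cbox a b) = measure lebesgue (cbox a b)"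
  proof (cases "cbox a b = {}")
    case False
    define c :: "real^'n" where "c = axis n (- a$n)"
    have "shear m n 1 ` cbox a b = (+) (- shear m n 1 c) ` shear m n 1 ` cbox (c + a) (c + b)"
      by (simp add: cbox_translation image_image linear_add [OF linear_shear])
    then have "measure lebesgue (shear m n 1 ` cbox a b)
             = measure lebesgue (shear m n 1 ` cbox (c + a) (c + b))"
      by (simp only: measure_translation)
    also have "\<dots> = measure lebesgue (cbox (c + a) (c + b))"
    proof -
      have "shear m n 1 = (\<lambda>x. \<chi> i. if i = m then x$m + x$n else x$i)"
        by (simp add: shear_def fun_eq_iff)
      moreover have "cbox (c + a) (c + b) \<noteq> {}" and "0 \<le> (c + a)$n"
        using False by (simp_all add: cbox_translation c_def)
      ultimately show ?thesis
        using measure_shear_interval [OF assms] by simp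
    qed
    also have "\<dots> = measure lebesgue (cbox a b)"
      by (simp only: cbox_translation measure_translation)
    finally show ?thesis .
  qed simp
qed

text \<open>Subtracting a coordinate undoes adding it, so it preserves volume too.\<close>

lemma volume_preserving_shear_minus:
  fixes m n :: "'n::finite"
  assumes "m \<noteq> n"
  shows "volume_preserving (shear m n (-1))"
  by (rule volume_preserving_left_inverse [OF linear_shear volume_preserving_shear_plus [OF assms]])
     (use assms in \<open>simp add: shear_def vec_eq_iff\<close>)

definition subtract_parents :: "('n \<Rightarrow> 'n option) \<Rightarrow> real^'n \<Rightarrow> real^'n" where
  "subtract_parents par y = (\<chi> v. y$v - (case par v of None \<Rightarrow> 0 | Some w \<Rightarrow> y$w))"

text \<open>If parents have strictly smaller rank, subtracting parents preserves volume: it is the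
  composition of one shear per vertex, taken in order of increasing rank, so that every
  shear reads a coordinate that has not been modified yet.\<close>

lemma volume_preserving_subtract_parents:
  fixes par :: "'n::finite \<Rightarrow> 'n option" and r :: "'n \<Rightarrow> 'a::linorder"
  assumes graded: "\<And>v w. par v = Some w \<Longrightarrow> r w < r v"
  shows "volume_preserving (subtract_parents par)"
proof -
  let ?D = "\<lambda>K. subtract_parents (\<lambda>v. if v \<in> K then par v else None)"
  have "volume_preserving (?D K)" for K :: "'n set"
    using finite [of K]
  proof (induction K rule: finite_ranking_induct [where f = r])
    case empty
    have "?D {} = id"
      by (simp add: subtract_parents_def fun_eq_iff)
    then show ?case
      by (simp add: volume_preserving_def)
  next
    case (insert x K)
    show ?case
    proof (cases "x \<notin> K \<and> par x \<noteq> None")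
      case True
      then obtain w where w: "par x = Some w" and "x \<notin> K"
        by auto
      have "x \<noteq> w"
        using graded [OF w] by auto
      have "par v \<noteq> Some x" if "v \<in> K" for v
        using graded insert.hyps(2) [OF that] by (metis leD)
      then have "?D (insert x K) = ?D K \<circ> shear x w (-1)"
        using w \<open>x \<notin> K\<close> \<open>x \<noteq> w\<close>
        by (auto simp: fun_eq_iff vec_eq_iff subtract_parents_def shear_def split: option.split)
      then show ?thesis
        using volume_preserving_comp [OF insert.IH volume_preserving_shear_minus [OF \<open>x \<noteq> w\<close>]]
        by (simp only:)
    next
      case False
      then have "?D (insert x K) = ?D K"
        by (auto simp: fun_eq_iff vec_eq_iff subtract_parents_def insert_absorb)
      with insert.IH show ?thesis
        by simp
    qed
  qed
  from this [of UNIV] show ?thesis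
    by simp
qed

definition order_simplex :: "('n::finite \<Rightarrow> nat) \<Rightarrow> (real^'n) set" where
  "order_simplex f = {y. (\<forall>v. 0 < y$v \<and> y$v < 1) \<and> (\<forall>u v. f u < f v \<longrightarrow> y$u < y$v)}"

lemma order_simplex_lmeasurable: "order_simplex f \<in> lmeasurable"
proof (rule lmeasurable_open)
  have "order_simplex f \<subseteq> cbox 0 1"
    by (auto simp: order_simplex_def mem_box_cart less_imp_le)
  then show "bounded (order_simplex f)"
    using bounded_cbox bounded_subset by blast
  have "order_simplex f = (\<Inter>v. {y. 0 < y$v} \<inter> {y. y$v < 1}) \<inter> (\<Inter>u. \<Inter>v\<in>{v. f u < f v}. {y. y$u < y$v})"
    by (auto simp: order_simplex_def)
  then show "open (order_simplex f)"
    by (auto intro!: open_Int open_INT open_Collect_less continuous_intros)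
qed

lemma open_std_simplex_cart:
  "{x::real^'n::finite. (\<forall>v. 0 < x$v) \<and> sum (($) x) UNIV < 1} = interior (convex hull (insert 0 Basis))"
proof -
  have basis: "(Basis :: (real^'n) set) = range (\<lambda>v. axis v 1)"
    by (auto simp: Basis_vec_def)
  have inj: "inj (\<lambda>v::'n. axis v (1::real))"
    by (simp add: inj_on_def axis_eq_axis)
  have sum_basis: "sum (\<lambda>i. x \<bullet> i) Basis = sum (($) x) UNIV" for x :: "real^'n"
    unfolding basis sum.reindex [OF inj] by (simp add: inner_axis)
  show ?thesis
    unfolding interior_std_simplex sum_basis by (auto simp: basis inner_axis)
qed

text \<open>The open standard simplex has volume \<open>1/n!\<close>: its frontier is negligible, and the
  library computes the volume of the closed one.\<close>

lemma measure_open_std_simplex_cart: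
  defines "\<Delta> \<equiv> {x::real^'n::finite. (\<forall>v. 0 < x$v) \<and> sum (($) x) UNIV < 1}"
  shows "\<Delta> \<in> lmeasurable" and "measure lebesgue \<Delta> = 1 / fact CARD('n)"
proof -
  let ?C = "convex hull (insert 0 Basis) :: (real^'n) set"
  have "compact ?C"
    by (simp add: finite_imp_compact_convex_hull)
  then have "bounded ?C" and "?C \<in> sets lborel"
    by (simp_all add: compact_imp_bounded borel_compact)
  then show "\<Delta> \<in> lmeasurable"
    by (simp add: \<Delta>_def open_std_simplex_cart lmeasurable_interior)
  have "measure lebesgue \<Delta> = measure lebesgue ?C"
    unfolding \<Delta>_def open_std_simplex_cart
    by (rule measure_interior [OF \<open>bounded ?C\<close> negligible_convex_frontier]) simp
  also have "\<dots> = 1 / fact CARD('n)"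
    using content_std_simplex [where 'a = "real^'n"] \<open>?C \<in> sets lborel\<close> by simp
  finally show "measure lebesgue \<Delta> = 1 / fact CARD('n)" .
qed

definition last_parent :: "('n \<times> 'n) set \<Rightarrow> ('n \<Rightarrow> nat) \<Rightarrow> 'n \<Rightarrow> 'n option" where
  "last_parent R f v = (if \<exists>u. (u, v) \<in> R then Some (ARG_MAX f u. (u, v) \<in> R) else None)"

lemma last_parent_SomeD:
  fixes f :: "'n::finite \<Rightarrow> nat"
  assumes "last_parent R f v = Some w"
  shows "(w, v) \<in> R" and "\<And>u. (u, v) \<in> R \<Longrightarrow> f u \<le> f w"
proof -
  obtain u0 where "(u0, v) \<in> R" and w: "w = (ARG_MAX f u. (u, v) \<in> R)"
    using assms by (auto simp: last_parent_def split: if_splits)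
  moreover have "f u < Suc (Max (range f))" for u
    by (simp add: le_imp_less_Suc)
  ultimately show "(w, v) \<in> R" and "\<And>u. (u, v) \<in> R \<Longrightarrow> f u \<le> f w"
    using arg_max_nat_lemma [of "\<lambda>u. (u, v) \<in> R" u0 f "Suc (Max (range f))"] by auto
qed

lemma last_parent_NoneD: "last_parent R f v = None \<Longrightarrow> (u, v) \<notin> R"
  by (auto simp: last_parent_def split: if_splits)

definition prefix_sums :: "('n::finite \<Rightarrow> nat) \<Rightarrow> real^'n \<Rightarrow> real^'n" where
  "prefix_sums f x = (\<chi> v. \<Sum>u | f u \<le> f v. x$u)"

lemma linear_prefix_sums: "linear (prefix_sums f)"
  by (rule linearI) (simp_all add: prefix_sums_def vec_eq_iff sum.distrib sum_distrib_left)

lemma subtract_parents_prefix_sums: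
  fixes f :: "'n::finite \<Rightarrow> nat"
  assumes "inj f"
  shows "subtract_parents (last_parent {(u, v). f u < f v} f) (prefix_sums f x) = x"
proof -
  have "prefix_sums f x $ v - (case last_parent {(u, v). f u < f v} f v of
          None \<Rightarrow> 0 | Some w \<Rightarrow> prefix_sums f x $ w) = x$v" for v
  proof (cases "last_parent {(u, v). f u < f v} f v")
    case None
    then have "\<not> f u < f v" for u
      using last_parent_NoneD [OF None] by simp
    then have "{u. f u \<le> f v} = {v}"
      using \<open>inj f\<close> by (auto simp: le_less inj_eq)
    with None show ?thesis
      by (simp add: prefix_sums_def)
  next
    case (Some w)
    then have "f w < f v" and "\<And>u. f u < f v \<Longrightarrow> f u \<le> f w"
      using last_parent_SomeD [OF Some] by auto
    then have "{u. f u \<le> f v} = insert v {u. f u \<le> f w}" and "v \<notin> {u. f u \<le> f w}"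
      using \<open>inj f\<close> by (auto simp: inj_eq le_less)
    with Some show ?thesis
      by (simp add: prefix_sums_def)
  qed
  then show ?thesis
    by (simp add: subtract_parents_def vec_eq_iff)
qed

lemma volume_preserving_prefix_sums:
  fixes f :: "'n::finite \<Rightarrow> nat"
  assumes "inj f"
  shows "volume_preserving (prefix_sums f)"
proof (rule volume_preserving_left_inverse [OF linear_prefix_sums _ subtract_parents_prefix_sums [OF assms]])
  show "volume_preserving (subtract_parents (last_parent {(u, v). f u < f v} f))"
    by (rule volume_preserving_subtract_parents [where r = f]) (auto dest: last_parent_SomeD)
qed

text \<open>Every order simplex of an injective labelling has volume at least \<open>1/n!\<close>, since it
  contains the volume-preserving image of the open standard simplex under prefix sums.\<close>

lemma order_simplex_measure_lower:
  fixes f :: "'n::finite \<Rightarrow> nat"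
  assumes "inj f"
  shows "1 / fact CARD('n) \<le> measure lebesgue (order_simplex f)"
proof -
  define \<Delta> where "\<Delta> = {x::real^'n. (\<forall>v. 0 < x$v) \<and> sum (($) x) UNIV < 1}"
  have \<Delta>: "\<Delta> \<in> lmeasurable" "measure lebesgue \<Delta> = 1 / fact CARD('n)"
    unfolding \<Delta>_def by (rule measure_open_std_simplex_cart)+
  have image: "prefix_sums f ` \<Delta> \<in> lmeasurable"
     "measure lebesgue (prefix_sums f ` \<Delta>) = measure lebesgue \<Delta>"
    using volume_preserving_prefix_sums [OF assms] \<Delta>(1) by (auto simp: volume_preserving_def)
  have "prefix_sums f ` \<Delta> \<subseteq> order_simplex f"
  proof
    fix y assume "y \<in> prefix_sums f ` \<Delta>"
    then obtain x where x: "x \<in> \<Delta>" and y: "y = prefix_sums f x"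
      by blast
    have pos: "0 < x$u" for u
      using x by (simp add: \<Delta>_def)
    have nonneg: "0 \<le> x$u" for u
      using pos less_imp_le by blast
    show "y \<in> order_simplex f"
      unfolding order_simplex_def
    proof (intro CollectI conjI allI impI)
      fix u v
      show "0 < y$v"
        using pos nonneg by (simp add: y prefix_sums_def sum_pos2 [of _ v])
      have "y$v \<le> sum (($) x) UNIV"
        using nonneg by (simp add: y prefix_sums_def sum_mono2)
      with x show "y$v < 1"
        by (simp add: \<Delta>_def)
      assume "f u < f v"
      then have "(\<Sum>w | f w \<le> f u. x$w) < (\<Sum>w | f w \<le> f v. x$w)"
        using pos nonneg by (intro sum_strict_mono2 [of _ _ v]) auto
      then show "y$u < y$v"
        by (simp add: y prefix_sums_def)
    qed
  qed
  then have "measure lebesgue (prefix_sums f ` \<Delta>) \<le> measure lebesgue (order_simplex f)"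
    by (rule measure_mono_fmeasurable [OF _ _ order_simplex_lmeasurable]) (use image in auto)
  with image \<Delta> show ?thesis
    by simp
qed

definition transfer_map :: "('n \<times> 'n) set \<Rightarrow> real^'n \<Rightarrow> real^'n" where
  "transfer_map Ori y = (\<chi> v. y$v - Max (insert 0 ((\<lambda>u. y$u) ` {u. (u, v) \<in> Ori})))"

text \<open>On the order simplex of \<open>f\<close> the coordinates are ordered like \<open>f\<close>, so the maximum over
  the in-neighbours is attained at the \<open>f\<close>-latest one: the transfer map is linear there.\<close>

lemma transfer_map_on_order_simplex:
  fixes f :: "'n::finite \<Rightarrow> nat"
  assumes "inj f" and y: "y \<in> order_simplex f"
  shows "transfer_map Ori y = subtract_parents (last_parent Ori f) y"
proof -
  have "Max (insert 0 ((\<lambda>u. y$u) ` {u. (u, v) \<in> Ori}))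
        = (case last_parent Ori f v of None \<Rightarrow> 0 | Some w \<Rightarrow> y$w)" for v
  proof (cases "last_parent Ori f v")
    case None
    then show ?thesis
      using last_parent_NoneD [OF None] by simp
  next
    case (Some w)
    have "y$u \<le> y$w" if "(u, v) \<in> Ori" for u
    proof -
      have "f u \<le> f w"
        using last_parent_SomeD(2) [OF Some that] .
      then consider "f u < f w" | "u = w"
        using \<open>inj f\<close> by (metis inj_eq le_neq_implies_less)
      then show ?thesis
        using y by cases (auto simp: order_simplex_def less_imp_le)
    qed
    moreover have "0 \<le> y$w" and "(w, v) \<in> Ori"
      using y last_parent_SomeD(1) [OF Some] by (auto simp: order_simplex_def less_imp_le)
    ultimately show ?thesis
      using Some by (intro Max_eqI) auto
  qed
  then show ?thesis
    by (simp add: transfer_map_def subtract_parents_def)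
qed

text \<open>For an acyclic orientation the transfer map is injective: by well-founded induction along
  the orientation, \<open>y\<^sub>v\<close> is determined by the image and the values on in-neighbours.\<close>

lemma inj_transfer_map:
  fixes Ori :: "('n::finite \<times> 'n) set"
  assumes "acyclic Ori"
  shows "inj (transfer_map Ori)"
proof (rule injI)
  fix y z :: "real^'n"
  assume eq: "transfer_map Ori y = transfer_map Ori z"
  have "wf Ori"
    using assms by (simp add: finite_acyclic_wf)
  then have "y$v = z$v" for v
  proof (induction v rule: wf_induct_rule)
    case (less v)
    then have "(\<lambda>u. y$u) ` {u. (u, v) \<in> Ori} = (\<lambda>u. z$u) ` {u. (u, v) \<in> Ori}"
      by auto
    moreover have "transfer_map Ori y $ v = transfer_map Ori z $ v"
      using eq by simp
    ultimately show ?case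
      by (simp add: transfer_map_def)
  qed
  then show "y = z"
    by (simp add: vec_eq_iff)
qed

text \<open>A bijection onto \<open>{1..n}\<close> is determined by its order: \<open>f v\<close> is the number of vertices
  not above \<open>v\<close>.\<close>

lemma card_below_bij:
  fixes f :: "'n::finite \<Rightarrow> nat"
  assumes "bij_betw f UNIV {1..n}"
  shows "card {u. f u \<le> f v} = f v"
proof -
  have "f ` {u. f u \<le> f v} = {1..f v}"
  proof
    show "f ` {u. f u \<le> f v} \<subseteq> {1..f v}"
      using assms by (auto simp: bij_betw_def)
    have "{1..f v} \<subseteq> f ` UNIV"
      using assms by (auto simp: bij_betw_def)
    then show "{1..f v} \<subseteq> f ` {u. f u \<le> f v}"
      by auto
  qed
  moreover have "inj f"
    using assms by (simp add: bij_betw_def)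
  ultimately show ?thesis
    by (metis card_atLeastAtMost diff_Suc_1 card_image inj_on_subset subset_UNIV)
qed

lemma order_simplex_disjoint:
  fixes f h :: "'n::finite \<Rightarrow> nat"
  assumes f: "bij_betw f UNIV {1..n}" and h: "bij_betw h UNIV {1..n}"
    and y: "y \<in> order_simplex f" "y \<in> order_simplex h"
  shows "f = h"
proof
  fix v
  have inj: "inj f" "inj h"
    using f h by (simp_all add: bij_betw_def)
  have same_order: "g u \<le> g v \<Longrightarrow> g' u \<le> g' v"
    if "inj g" "y \<in> order_simplex g" "y \<in> order_simplex g'" for g g' :: "'n \<Rightarrow> nat" and u
  proof (rule ccontr)
    assume "g u \<le> g v" "\<not> g' u \<le> g' v"
    then have "y$v < y$u" and "u \<noteq> v"
      using that(3) by (auto simp: order_simplex_def)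
    moreover have "g u < g v"
      using \<open>g u \<le> g v\<close> \<open>u \<noteq> v\<close> \<open>inj g\<close> by (metis inj_eq le_neq_implies_less)
    then have "y$u < y$v"
      using that(2) by (simp add: order_simplex_def)
    with \<open>y$v < y$u\<close> show False
      by simp
  qed
  have "f u \<le> f v \<longleftrightarrow> h u \<le> h v" for u
    using same_order [of f h u] same_order [of h f u] inj y by blast
  then show "f v = h v"
    using card_below_bij [OF f, of v] card_below_bij [OF h, of v] by simp
qed

lemma staircase_in_convex_hull:
  fixes t :: "nat \<Rightarrow> real" and lo hi :: "'n::finite \<Rightarrow> nat" and X :: "(real^'n) set"
  assumes mono: "\<And>i. i < n \<Longrightarrow> t i \<le> t (Suc i)" and total: "t n - t 0 \<le> 1"
    and bounds: "\<And>v. lo v \<le> hi v" "\<And>v. hi v \<le> n"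
    and layers: "\<And>i. i < n \<Longrightarrow> indicator_vec {v. lo v \<le> i \<and> i < hi v} \<in> X" and "0 \<in> X"
  shows "(\<chi> v. t (hi v) - t (lo v)) \<in> convex hull X"
proof -
  define c where "c i = (if i < n then t (Suc i) - t i else 1 - (t n - t 0))" for i
  define a where "a i = (if i < n then indicator_vec {v. lo v \<le> i \<and> i < hi v} else 0)" for i
  have "(\<chi> v. t (hi v) - t (lo v)) = (\<Sum>i\<le>n. c i *\<^sub>R a i)"
  proof -
    have "(\<Sum>i\<le>n. c i *\<^sub>R a i) $ v = t (hi v) - t (lo v)" for v
    proof -
      have "(\<Sum>i\<le>n. c i *\<^sub>R a i) $ v
          = (\<Sum>i<n. if i \<in> {lo v..<hi v} then t (Suc i) - t i else 0)"
        by (simp add: lessThan_Suc_atMost [symmetric] c_def a_def indicator_vec_def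
            sum_component cong: if_cong) (rule sum.cong; simp)
      also have "\<dots> = (\<Sum>i \<in> {..<n} \<inter> {lo v..<hi v}. t (Suc i) - t i)"
        by (simp only: sum.inter_restrict finite_lessThan)
      also have "\<dots> = (\<Sum>i = lo v..<hi v. t (Suc i) - t i)"
        using bounds(2) [of v] by (simp add: Int_absorb1 subset_eq)
      also have "\<dots> = t (hi v) - t (lo v)"
        using bounds(1) by (rule sum_Suc_diff')
      finally show ?thesis .
    qed
    then show ?thesis
      by (simp add: vec_eq_iff)
  qed
  also have "\<dots> \<in> convex hull X"
  proof (rule convex_sum [OF finite_atMost convex_convex_hull])
    show "(\<Sum>i\<le>n. c i) = 1"
      by (simp add: lessThan_Suc_atMost [symmetric] c_def sum_lessThan_telescope)
    show "0 \<le> c i" if "i \<in> {..n}" for i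
      using mono total by (simp add: c_def)
    show "a i \<in> convex hull X" if "i \<in> {..n}" for i
      using layers \<open>0 \<in> X\<close> hull_subset [of X convex] by (auto simp: a_def)
  qed
  finally show ?thesis .
qed

definition parent_label :: "('n \<times> 'n) set \<Rightarrow> ('n \<Rightarrow> nat) \<Rightarrow> 'n \<Rightarrow> nat" where
  "parent_label Ori f v = (case last_parent Ori f v of None \<Rightarrow> 0 | Some w \<Rightarrow> f w)"

lemma parent_label_ge:
  fixes f :: "'n::finite \<Rightarrow> nat"
  assumes "(u, v) \<in> Ori"
  shows "f u \<le> parent_label Ori f v"
proof (cases "last_parent Ori f v")
  case None
  with last_parent_NoneD assms show ?thesis
    by metis
next
  case (Some w)
  with last_parent_SomeD(2) [OF Some assms] show ?thesis
    by (simp add: parent_label_def)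
qed

text \<open>The layers of the staircase are stable sets: an edge inside a layer would be oriented,
  say \<open>u \<rightarrow> v\<close>, and then \<open>f u \<le> parent_label Ori f v \<le> i < f u\<close>.\<close>

lemma stable_layer:
  fixes E Ori :: "('n::finite \<times> 'n) set" and f :: "'n \<Rightarrow> nat"
  assumes cover: "\<And>u v. (u, v) \<in> E \<Longrightarrow> (u, v) \<in> Ori \<or> (v, u) \<in> Ori"
  shows "stable_set E {v. parent_label Ori f v \<le> i \<and> i < f v}"
  unfolding stable_set_def
proof (intro ballI notI)
  fix u v
  assume "u \<in> {v. parent_label Ori f v \<le> i \<and> i < f v}"
    and "v \<in> {v. parent_label Ori f v \<le> i \<and> i < f v}" and "(u, v) \<in> E"
  with cover parent_label_ge [of _ _ Ori f] show False
    by (metis mem_Collect_eq not_le order.strict_trans2)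
qed

text \<open>The transfer map sends the order simplex of a linear extension \<open>f\<close> into the stable set
  polytope: on it, \<open>transfer_map Ori y $ v = t (f v) - t (parent_label Ori f v)\<close>, where
  \<open>t k\<close> is the coordinate of the vertex labelled \<open>k\<close> (and \<open>t 0 = 0\<close>), so the staircase
  lemma applies with stable layers.\<close>

lemma transfer_map_in_stab_polytope:
  fixes E Ori :: "('n::finite \<times> 'n) set" and f :: "'n \<Rightarrow> nat"
  assumes cover: "\<And>u v. (u, v) \<in> E \<Longrightarrow> (u, v) \<in> Ori \<or> (v, u) \<in> Ori"
    and f: "bij_betw f UNIV {1..CARD('n)}" and ext: "\<And>u v. (u, v) \<in> Ori \<Longrightarrow> f u < f v"
    and y: "y \<in> order_simplex f"
  shows "transfer_map Ori y \<in> stab_polytope E"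
proof -
  define n where "n = CARD('n)"
  define t where "t k = (if k = 0 then 0 else y $ inv f k)" for k
  have "inj f" and f_range: "\<And>v. f v \<in> {1..n}"
    using f by (auto simp: bij_betw_def n_def)
  have f_inv: "f (inv f k) = k" if "k \<in> {1..n}" for k
    using bij_betw_inv_into_right [OF f] that by (simp add: n_def)
  have t_f: "t (f v) = y$v" for v
    using f_range [of v] \<open>inj f\<close> by (simp add: t_def)
  have "transfer_map Ori y = (\<chi> v. t (f v) - t (parent_label Ori f v))"
    unfolding transfer_map_on_order_simplex [OF \<open>inj f\<close> y]
    by (auto simp: vec_eq_iff subtract_parents_def parent_label_def t_f split: option.split)
       (simp add: t_def)
  also have "\<dots> \<in> convex hull {indicator_vec I | I. stable_set E I}"
  proof (rule staircase_in_convex_hull)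
    show "t i \<le> t (Suc i)" if "i < n" for i
    proof (cases "i = 0")
      case True
      then show ?thesis
        using y by (auto simp: t_def order_simplex_def less_imp_le)
    next
      case False
      then have "f (inv f i) < f (inv f (Suc i))"
        using that f_inv by simp
      then show ?thesis
        using False y by (auto simp: t_def order_simplex_def less_imp_le)
    qed
    have "0 < n"
      by (simp add: n_def)
    then show "t n - t 0 \<le> 1"
      using y by (auto simp: t_def order_simplex_def less_imp_le)
    show "parent_label Ori f v \<le> f v" and "f v \<le> n" for v
      using f_range [of v] ext last_parent_SomeD(1) [of Ori f v]
      by (auto simp: parent_label_def less_imp_le split: option.split)
    show "indicator_vec {v. parent_label Ori f v \<le> i \<and> i < f v}
            \<in> {indicator_vec I | I. stable_set E I}" for i
      using stable_layer [OF cover] by blast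
    have "indicator_vec {} = (0 :: real^'n)" and "stable_set E {}"
      by (simp_all add: indicator_vec_def vec_eq_iff stable_set_def)
    then show "0 \<in> {indicator_vec I | I. stable_set E I}"
      by (metis (mono_tags, lifting) mem_Collect_eq)
  qed
  finally show ?thesis
    by (simp add: stab_polytope_def)
qed

lemma stab_polytope_lmeasurable: "stab_polytope (E :: ('n::finite \<times> 'n) set) \<in> lmeasurable"
proof -
  have "finite {indicator_vec I | I. stable_set E I}"
    by (rule finite_subset [of _ "range (indicator_vec :: 'n set \<Rightarrow> real^'n)"]) auto
  then show ?thesis
    unfolding stab_polytope_def by (intro lmeasurable_compact finite_imp_compact_convex_hull)
qed

lemma finite_linear_extensions: "finite (linear_extensions (Ori :: ('n::finite \<times> 'n) set))"
proof (rule finite_subset)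
  show "linear_extensions Ori \<subseteq> PiE UNIV (\<lambda>_. {1..CARD('n)})"
    by (auto simp: linear_extensions_def bij_betw_def PiE_def)
qed (simp add: finite_PiE)

text \<open>The transfer image of the order simplex of a linear extension is measurable with volume
  at least \<open>1/n!\<close>, since the transfer map agrees there with a volume-preserving linear map.\<close>

lemma transfer_image_measure_lower:
  fixes Ori :: "('n::finite \<times> 'n) set"
  assumes "f \<in> linear_extensions Ori"
  shows "transfer_map Ori ` order_simplex f \<in> lmeasurable"
    and "1 / fact CARD('n) \<le> measure lebesgue (transfer_map Ori ` order_simplex f)"
proof -
  have "inj f" and ext: "\<And>u v. (u, v) \<in> Ori \<Longrightarrow> f u < f v"
    using assms by (auto simp: linear_extensions_def bij_betw_def)
  then have image: "transfer_map Ori ` order_simplex f = subtract_parents (last_parent Ori f) ` order_simplex f"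
    by (intro image_cong transfer_map_on_order_simplex) auto
  have "volume_preserving (subtract_parents (last_parent Ori f))"
    by (rule volume_preserving_subtract_parents [where r = f]) (auto dest: ext last_parent_SomeD(1))
  then have "transfer_map Ori ` order_simplex f \<in> lmeasurable"
    and "measure lebesgue (transfer_map Ori ` order_simplex f) = measure lebesgue (order_simplex f)"
    unfolding image using order_simplex_lmeasurable [of f] by (simp_all add: volume_preserving_def)
  with order_simplex_measure_lower [OF \<open>inj f\<close>]
  show "transfer_map Ori ` order_simplex f \<in> lmeasurable"
    and "1 / fact CARD('n) \<le> measure lebesgue (transfer_map Ori ` order_simplex f)"
    by simp_all
qed

lemma transfer_images_disjoint:
  fixes Ori :: "('n::finite \<times> 'n) set"
  assumes "acyclic Ori"
  shows "pairwise (\<lambda>f h. disjnt (transfer_map Ori ` order_simplex f) (transfer_map Ori ` order_simplex h))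
           (linear_extensions Ori)"
proof (rule pairwiseI)
  fix f h
  assume "f \<in> linear_extensions Ori" "h \<in> linear_extensions Ori" "f \<noteq> h"
  then have bij: "bij_betw f UNIV {1..CARD('n)}" "bij_betw h UNIV {1..CARD('n)}"
    by (simp_all add: linear_extensions_def)
  have "order_simplex f \<inter> order_simplex h = {}"
    using order_simplex_disjoint [OF bij] \<open>f \<noteq> h\<close> by blast
  with inj_transfer_map [OF assms]
  show "disjnt (transfer_map Ori ` order_simplex f) (transfer_map Ori ` order_simplex h)"
    by (auto simp: disjnt_iff dest: injD)
qed

text \<open>The bound for a single acyclic orientation: the transfer images of the order simplices
  of its linear extensions are disjoint subsets of the polytope, each of volume at least \<open>1/n!\<close>.\<close>

lemma card_linear_extensions_le_volume:
  fixes E Ori :: "('n::finite \<times> 'n) set"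
  assumes "acyclic_orientation E Ori"
  shows "real (card (linear_extensions Ori)) \<le> fact CARD('n) * measure lebesgue (stab_polytope E)"
proof -
  define LE where "LE = linear_extensions Ori"
  define T where "T f = transfer_map Ori ` order_simplex f" for f
  have cover: "\<And>u v. (u, v) \<in> E \<Longrightarrow> (u, v) \<in> Ori \<or> (v, u) \<in> Ori" and "acyclic Ori"
    using assms by (auto simp: acyclic_orientation_def)
  have T: "T f \<in> lmeasurable" "1 / fact CARD('n) \<le> measure lebesgue (T f)" if "f \<in> LE" for f
    using transfer_image_measure_lower that by (auto simp: T_def LE_def)
  have "T f \<subseteq> stab_polytope E" if "f \<in> LE" for f
  proof -
    have "bij_betw f UNIV {1..CARD('n)}" and "\<And>u v. (u, v) \<in> Ori \<Longrightarrow> f u < f v"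
      using that by (auto simp: LE_def linear_extensions_def)
    with transfer_map_in_stab_polytope [OF cover] show ?thesis
      by (auto simp: T_def)
  qed
  then have sub: "(\<Union>f\<in>LE. T f) \<subseteq> stab_polytope E"
    by blast
  have "real (card LE) / fact CARD('n) = (\<Sum>f\<in>LE. 1 / fact CARD('n))"
    by simp
  also have "\<dots> \<le> (\<Sum>f\<in>LE. measure lebesgue (T f))"
    using T by (intro sum_mono) auto
  also have "\<dots> = measure lebesgue (\<Union>f\<in>LE. T f)"
    using T transfer_images_disjoint [OF \<open>acyclic Ori\<close>] finite_linear_extensions
    by (intro measure_UNION' [symmetric]) (auto simp: LE_def T_def)
  also have "\<dots> \<le> measure lebesgue (stab_polytope E)"
    using T finite_linear_extensions
    by (intro measure_mono_fmeasurable [OF sub _ stab_polytope_lmeasurable])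
       (auto simp: LE_def fmeasurableD)
  finally show ?thesis
    by (simp add: LE_def field_simps)
qed

text \<open>Every simple graph has an acyclic orientation: orient edges along an injective labelling.\<close>

lemma acyclic_orientation_exists:
  fixes E :: "('n::finite \<times> 'n) set"
  assumes "simple_graph E"
  shows "\<exists>Ori. acyclic_orientation E Ori"
proof -
  obtain g :: "'n \<Rightarrow> nat" where "inj g"
    using finite_imp_inj_to_nat_seg [of "UNIV :: 'n set"] by auto
  define Ori where "Ori = {(u, v). (u, v) \<in> E \<and> g u < g v}"
  have "g u < g v" if "(u, v) \<in> Ori\<^sup>+" for u v
    using that by (induction rule: trancl_induct) (auto simp: Ori_def)
  then have "acyclic Ori"
    by (auto simp: acyclic_def)
  moreover have "(u, v) \<in> Ori \<or> (v, u) \<in> Ori" if "(u, v) \<in> E" for u v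
  proof -
    have "u \<noteq> v" and "(v, u) \<in> E"
      using that assms by (auto simp: simple_graph_def irrefl_def sym_def)
    moreover have "g u \<noteq> g v"
      using \<open>u \<noteq> v\<close> \<open>inj g\<close> by (simp add: inj_eq)
    ultimately show ?thesis
      using that by (auto simp: Ori_def)
  qed
  ultimately have "acyclic_orientation E Ori"
    by (auto simp: acyclic_orientation_def Ori_def)
  then show ?thesis
    by blast
qed

theorem mainTheorem7:
  fixes E :: "('n::finite \<times> 'n) set"
  assumes "simple_graph E"
  shows "real (eps_graph E) \<le> fact CARD('n) * measure lebesgue (stab_polytope E)"
proof -
  define counts where "counts = {card (linear_extensions Ori) | Ori. acyclic_orientation E Ori}"
  have "finite counts"
    unfolding counts_def by (simp add: setcompr_eq_image)
  moreover have "counts \<noteq> {}"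
    using acyclic_orientation_exists [OF assms] by (auto simp: counts_def)
  ultimately have "eps_graph E \<in> counts"
    unfolding eps_graph_def counts_def [symmetric] by (rule Max_in)
  then obtain Ori where "acyclic_orientation E Ori" and "eps_graph E = card (linear_extensions Ori)"
    by (auto simp: counts_def)
  then show ?thesis
    using card_linear_extensions_le_volume by simp
qed

end
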